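(* Let $\Sigma$ be a finite alphabet, let $X,Y\subseteq\Sigma^{\mathbb{Z}}$ be shift spaces, and let $\mu$ be a shift-invariant ergodic Borel probability measure on $Y$. Then \[\inf\{\nu(\{\mathbf{x}_0\ne\mathbf{y}_0\}):\nu\in M_{\mathcal{E}}(X,Y,\mu)\}=\inf\{\nu(\{\mathbf{x}_0\ne\mathbf{y}_0\}):\nu\in M(X,Y,\mu)\},\] where $\{\mathbf{x}_0\ne\mathbf{y}_0\}=\{(\mathbf{x},\mathbf{y})\in X\times Y:\mathbf{x}_0\ne\mathbf{y}_0\}$.
   Context: A shift space is a closed subset of $\Sigma^{\mathbb{Z}}$ invariant under the left shift $T$. On $X\times Y$ the shift acts by $T(\mathbf{x},\mathbf{y})=(T\mathbf{x},T\mathbf{y})$. $M(X,Y,\mu)$ is the set of extensions of $\mu$: shift-invariant Borel probability measures $\nu$ on $X\times Y$ with $\nu(X\times A)=\mu(A)$ for all measurable $A\subseteq Y$. $M_{\mathcal{E}}(X,Y,\mu)$ is the subset of those extensions that are ergodic for the shift on $X\times Y$. *)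

theory Defs
  imports "HOL-Probability.Probability"
begin

definition borel_of :: "'a topology \<Rightarrow> 'a measure" where
  "borel_of T = sigma (topspace T) {U. openin T U}"

definition full_shift_top :: "'a set \<Rightarrow> (int \<Rightarrow> 'a) topology" where
  "full_shift_top \<Sigma> = product_topology (\<lambda>_. discrete_topology \<Sigma>) UNIV"

definition lshift :: "(int \<Rightarrow> 'a) \<Rightarrow> (int \<Rightarrow> 'a)" where
  "lshift x = (\<lambda>n. x (n + 1))"

definition lshift2 :: "(int \<Rightarrow> 'a) \<times> (int \<Rightarrow> 'b) \<Rightarrow> (int \<Rightarrow> 'a) \<times> (int \<Rightarrow> 'b)" where
  "lshift2 p = (lshift (fst p), lshift (snd p))"

definition shift_space :: "'a set \<Rightarrow> (int \<Rightarrow> 'a) set \<Rightarrow> bool" where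
  "shift_space \<Sigma> X \<longleftrightarrow> closedin (full_shift_top \<Sigma>) X \<and> lshift ` X = X"

definition invariant_borel_prob :: "'a topology \<Rightarrow> ('a \<Rightarrow> 'a) \<Rightarrow> 'a measure \<Rightarrow> bool" where
  "invariant_borel_prob T f M \<longleftrightarrow>
     sets M = sets (borel_of T) \<and> space M = topspace T \<and> prob_space M \<and>
     (\<forall>A\<in>sets M. emeasure M (f -` A \<inter> space M) = emeasure M A)"

definition ergodic_borel_prob :: "'a topology \<Rightarrow> ('a \<Rightarrow> 'a) \<Rightarrow> 'a measure \<Rightarrow> bool" where
  "ergodic_borel_prob T f M \<longleftrightarrow> invariant_borel_prob T f M \<and>
     (\<forall>A\<in>sets M. f -` A \<inter> space M = A \<longrightarrow> emeasure M A = 0 \<or> emeasure M A = 1)"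

definition extensions ::
  "'a set \<Rightarrow> (int \<Rightarrow> 'a) set \<Rightarrow> (int \<Rightarrow> 'a) set \<Rightarrow> (int \<Rightarrow> 'a) measure
     \<Rightarrow> ((int \<Rightarrow> 'a) \<times> (int \<Rightarrow> 'a)) measure set" where
  "extensions \<Sigma> X Y \<mu> = {\<nu>.
     invariant_borel_prob
       (prod_topology (subtopology (full_shift_top \<Sigma>) X) (subtopology (full_shift_top \<Sigma>) Y))
       lshift2 \<nu> \<and>
     (\<forall>A\<in>sets \<mu>. emeasure \<nu> (X \<times> A) = emeasure \<mu> A)}"

definition ergodic_extensions ::
  "'a set \<Rightarrow> (int \<Rightarrow> 'a) set \<Rightarrow> (int \<Rightarrow> 'a) set \<Rightarrow> (int \<Rightarrow> 'a) measure
     \<Rightarrow> ((int \<Rightarrow> 'a) \<times> (int \<Rightarrow> 'a)) measure set" where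
  "ergodic_extensions \<Sigma> X Y \<mu> = {\<nu> \<in> extensions \<Sigma> X Y \<mu>.
     ergodic_borel_prob
       (prod_topology (subtopology (full_shift_top \<Sigma>) X) (subtopology (full_shift_top \<Sigma>) Y))
       lshift2 \<nu>}"

end

theory Submission
  imports Defs "HOL-Library.Diagonal_Subsequence"
begin

(* The extensions of \<mu> form a convex set which is sequentially compact for convergence on
   cylinder sets: the cylinders of X \<times> Y form a countable algebra which is a compact class, so
   limits of cylinder values extend to measures by Caratheodory. As \<nu> \<mapsto> \<nu>{x\<^sub>0 \<noteq> y\<^sub>0} is continuous
   and affine, its minimisers form a nonempty compact convex set, on which the strictly convex
   functional \<Sum>\<^sub>k 2\<^sup>-\<^sup>k \<nu>(C\<^sub>k)\<^sup>2 attains its maximum at some \<nu>. This \<nu> is ergodic: otherwise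
   conditioning on an invariant set of measure strictly between 0 and 1 splits \<nu> into a proper
   convex combination of two distinct extensions (their Y-marginals are invariant and dominated
   by a multiple of the ergodic \<mu>, hence equal to \<mu>), both again minimisers, contradicting strict
   convexity. *)

lemma emeasure_Diff_swap:
  assumes "finite_measure M" "A \<in> sets M" "B \<in> sets M" "emeasure M A = emeasure M B"
  shows "emeasure M (A - B) = emeasure M (B - A)"
proof -
  interpret finite_measure M by fact
  have "measure M A = measure M B"
    using assms(4) by (simp add: emeasure_eq_measure)
  then have "measure M (A - B) = measure M (B - A)"
    using assms(2,3) by (simp add: finite_measure_Diff' Int_commute)
  then show ?thesis by (simp add: emeasure_eq_measure)
qed

lemma prob_space_eq_if_le:
  assumes M: "prob_space M" and N: "prob_space N" and sets_eq: "sets N = sets M"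
    and le: "\<And>B. B \<in> sets M \<Longrightarrow> emeasure N B \<le> emeasure M B"
  shows "N = M"
proof (rule measure_eqI[OF sets_eq])
  interpret M: prob_space M by fact
  interpret N: prob_space N by fact
  have space_eq: "space N = space M" using sets_eq by (rule sets_eq_imp_space_eq)
  fix B assume "B \<in> sets N"
  then have B: "B \<in> sets M" using sets_eq by simp
  then have "space M - B \<in> sets M" by auto
  moreover have "N.prob (space M - B) = 1 - N.prob B"
    using N.prob_compl[of B] B sets_eq space_eq by simp
  ultimately have "1 - N.prob B \<le> 1 - M.prob B"
    using le[of "space M - B"] B by (simp add: N.emeasure_eq_measure M.emeasure_eq_measure M.prob_compl)
  moreover have "N.prob B \<le> M.prob B"
    using le[OF B] by (simp add: N.emeasure_eq_measure M.emeasure_eq_measure)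
  ultimately show "emeasure N B = emeasure M B"
    by (simp add: N.emeasure_eq_measure M.emeasure_eq_measure)
qed

lemma emeasure_density_le_if_le_1:
  assumes [measurable]: "h \<in> borel_measurable M" "S \<in> sets M" and le: "\<And>x. x \<in> S \<Longrightarrow> h x \<le> 1"
  shows "emeasure (density M h) S \<le> emeasure M S"
proof -
  have "emeasure (density M h) S = (\<integral>\<^sup>+ x. h x * indicator S x \<partial>M)"
    by (simp add: emeasure_density)
  also have "\<dots> \<le> (\<integral>\<^sup>+ x. indicator S x \<partial>M)"
    using le by (intro nn_integral_mono) (simp split: split_indicator)
  finally show ?thesis by simp
qed

lemma emeasure_density_gt_if_gt_1:
  assumes [measurable]: "h \<in> borel_measurable M" "S \<in> sets M" and gt: "\<And>x. x \<in> S \<Longrightarrow> 1 < h x"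
    and "emeasure M S \<noteq> 0" "emeasure M S \<noteq> \<infinity>"
  shows "emeasure M S < emeasure (density M h) S"
proof -
  have "\<not> (AE x in M. h x * indicator S x \<le> indicator S x)"
  proof
    assume "AE x in M. h x * indicator S x \<le> indicator S x"
    then have "AE x in M. x \<notin> S"
      by eventually_elim (use gt in \<open>force split: split_indicator\<close>)
    then show False
      using \<open>emeasure M S \<noteq> 0\<close> AE_iff_null_sets[OF assms(2)] by auto
  qed
  then have "(\<integral>\<^sup>+ x. indicator S x \<partial>M) < (\<integral>\<^sup>+ x. h x * indicator S x \<partial>M)"
    using gt assms(5) by (intro nn_integral_less) (auto split: split_indicator intro: less_imp_le)
  then show ?thesis by (simp add: emeasure_density)
qed

lemma convex_combination_eq_lower_bound:
  fixes a b c t :: real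
  assumes "0 < t" "t < 1" "c \<le> a" "c \<le> b" "t * a + (1 - t) * b = c"
  shows "a = c" "b = c"
proof -
  have "t * (a - c) + (1 - t) * (b - c) = 0" using assms(5) by (simp add: algebra_simps)
  moreover have "0 \<le> t * (a - c)" "0 \<le> (1 - t) * (b - c)" using assms(1-4) by simp_all
  ultimately have "t * (a - c) = 0" "(1 - t) * (b - c) = 0" by linarith+
  then show "a = c" "b = c" using assms(1,2) by simp_all
qed

lemma measure_uniform_measure_mixture:
  assumes "prob_space M" "A \<in> sets M" "S \<in> sets M" "0 < measure M A" "measure M A < 1"
  defines "t \<equiv> measure M A"
  shows "measure M S = t * measure (uniform_measure M A) S
                         + (1 - t) * measure (uniform_measure M (space M - A)) S"
proof -
  interpret prob_space M by fact
  have compl: "space M - A \<in> sets M" "measure M (space M - A) = 1 - t"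
    using assms(2) by (auto simp: t_def prob_compl)
  have "S = (A \<inter> S) \<union> ((space M - A) \<inter> S)"
    using sets.sets_into_space[OF assms(3)] by blast
  then have "measure M S = measure M (A \<inter> S) + measure M ((space M - A) \<inter> S)"
    using assms(2,3) compl(1) by (metis Diff_disjoint Int_Un_distrib2 Int_absorb Int_assoc
        Int_commute finite_measure_Union sets.Int)
  then show ?thesis
    using assms(2-5) compl by (simp add: t_def emeasure_eq_measure)
qed

lemma emeasure_uniform_measure_vimage:
  assumes T: "T \<in> measurable M M"
    and inv: "\<And>B. B \<in> sets M \<Longrightarrow> emeasure M (T -` B \<inter> space M) = emeasure M B"
    and A: "A \<in> sets M" "T -` A \<inter> space M = A" and B: "B \<in> sets M"
  shows "emeasure (uniform_measure M A) (T -` B \<inter> space M) = emeasure (uniform_measure M A) B"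
proof -
  have "A \<inter> (T -` B \<inter> space M) = T -` (A \<inter> B) \<inter> space M"
    using A(2) by blast
  then show ?thesis
    using inv[of "A \<inter> B"] A(1) B measurable_sets[OF T B] by simp
qed

lemma ergodic_AE_invariant_set:
  assumes T[measurable]: "T \<in> measurable M M"
    and inv: "\<And>B. B \<in> sets M \<Longrightarrow> emeasure M (T -` B \<inter> space M) = emeasure M B"
    and erg: "\<And>B. B \<in> sets M \<Longrightarrow> T -` B \<inter> space M = B \<Longrightarrow> emeasure M B = 0 \<or> emeasure M B = 1"
    and E[measurable]: "E \<in> sets M" and AE_inv: "AE x in M. T x \<in> E \<longleftrightarrow> x \<in> E"
  shows "emeasure M E = 0 \<or> emeasure M E = 1"
proof -
  have distr_T: "distr M M T = M"
    by (rule measure_eqI) (auto simp: emeasure_distr inv)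
  have iter[measurable]: "T ^^ n \<in> measurable M M" for n
    by (induction n) (auto simp del: funpow.simps simp: funpow_Suc_right intro: measurable_compose[OF T])
  have AE_iter: "AE x in M. (T ^^ n) x \<in> E \<longleftrightarrow> x \<in> E" for n
  proof (induction n)
    case (Suc n)
    have "AE x in M. (T ^^ n) (T x) \<in> E \<longleftrightarrow> T x \<in> E"
      by (rule AE_distrD[OF T]) (simp only: distr_T Suc.IH)
    with AE_inv show ?case
      by eventually_elim (simp add: funpow_Suc_right del: funpow.simps)
  qed simp
  \<comment> \<open>The set of points visiting \<open>E\<close> infinitely often is strictly invariant and a.e. equal to \<open>E\<close>.\<close>
  define E' where "E' = {x \<in> space M. frequently (\<lambda>n. (T ^^ n) x \<in> E) sequentially}"
  have [measurable]: "E' \<in> sets M"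
    unfolding E'_def frequently_sequentially by measurable
  have "frequently (\<lambda>n. (T ^^ n) (T x) \<in> E) sequentially
      \<longleftrightarrow> frequently (\<lambda>n. (T ^^ n) x \<in> E) sequentially" for x
    using eventually_sequentially_Suc[of "\<lambda>n. (T ^^ n) x \<notin> E"]
    by (simp add: frequently_def funpow_Suc_right del: funpow.simps)
  then have "T -` E' \<inter> space M = E'"
    using measurable_space[OF T] by (auto simp: E'_def)
  moreover have "emeasure M E' = emeasure M E"
  proof (rule emeasure_eq_AE)
    have "AE x in M. \<forall>n. (T ^^ n) x \<in> E \<longleftrightarrow> x \<in> E"
      using AE_iter by (simp add: AE_all_countable)
    with AE_space show "AE x in M. x \<in> E' \<longleftrightarrow> x \<in> E"
      by eventually_elim (auto simp: E'_def frequently_sequentially)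
  qed auto
  ultimately show ?thesis using erg[of E'] by simp
qed


lemma density_superlevel_set_AE_invariant:
  assumes \<mu>: "prob_space \<mu>" and [measurable]: "h \<in> borel_measurable \<mu>"
    and \<pi>: "prob_space (density \<mu> h)" and T[measurable]: "T \<in> measurable \<mu> \<mu>"
    and inv_\<mu>: "\<And>B. B \<in> sets \<mu> \<Longrightarrow> emeasure \<mu> (T -` B \<inter> space \<mu>) = emeasure \<mu> B"
    and inv_\<pi>: "\<And>B. B \<in> sets \<mu> \<Longrightarrow> emeasure (density \<mu> h) (T -` B \<inter> space \<mu>) = emeasure (density \<mu> h) B"
  defines "E \<equiv> {x \<in> space \<mu>. 1 < h x}"
  shows "AE x in \<mu>. T x \<in> E \<longleftrightarrow> x \<in> E"
proof -
  interpret \<mu>: prob_space \<mu> by fact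
  interpret \<pi>: prob_space "density \<mu> h" by fact
  have [measurable]: "E \<in> sets \<mu>" by (simp add: E_def)
  define F where "F = T -` E \<inter> space \<mu>"
  have [measurable]: "F \<in> sets \<mu>" by (simp add: F_def)
  have \<mu>_swap: "emeasure \<mu> (F - E) = emeasure \<mu> (E - F)"
    using inv_\<mu>[of E] by (intro emeasure_Diff_swap) (auto simp: F_def \<mu>.finite_measure_axioms)
  \<comment> \<open>\<open>E\<close> and \<open>F = T\<^sup>-\<^sup>1 E\<close> have the same measure under \<open>\<mu>\<close> and under \<open>density \<mu> h\<close>; the
      latter is \<open>\<le> \<mu>\<close> outside \<open>E\<close> and \<open>> \<mu>\<close> on non-null subsets of \<open>E\<close>.\<close>
  have "emeasure (density \<mu> h) (E - F) = emeasure (density \<mu> h) (F - E)"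
    using inv_\<pi>[of E] by (intro emeasure_Diff_swap) (auto simp: F_def \<pi>.finite_measure_axioms)
  also have "\<dots> \<le> emeasure \<mu> (F - E)"
    by (rule emeasure_density_le_if_le_1) (auto simp: E_def F_def)
  also have "\<dots> = emeasure \<mu> (E - F)" by (rule \<mu>_swap)
  finally have le: "emeasure (density \<mu> h) (E - F) \<le> emeasure \<mu> (E - F)" .
  have "emeasure \<mu> (E - F) = 0"
  proof (rule ccontr)
    assume "emeasure \<mu> (E - F) \<noteq> 0"
    then have "emeasure \<mu> (E - F) < emeasure (density \<mu> h) (E - F)"
      by (intro emeasure_density_gt_if_gt_1) (auto simp: E_def)
    with le show False by simp
  qed
  then have "E - F \<in> null_sets \<mu>" "F - E \<in> null_sets \<mu>"
    using \<mu>_swap by (auto intro: null_setsI)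
  then have "AE x in \<mu>. x \<notin> E - F" "AE x in \<mu>. x \<notin> F - E"
    using AE_iff_null_sets by blast+
  then show ?thesis
    using AE_space by eventually_elim (auto simp: F_def)
qed

lemma invariant_prob_eq_if_dominated_by_ergodic:
  assumes \<mu>: "prob_space \<mu>" and \<pi>: "prob_space \<pi>" and sets_eq: "sets \<pi> = sets \<mu>"
    and T[measurable]: "T \<in> measurable \<mu> \<mu>"
    and inv_\<mu>: "\<And>B. B \<in> sets \<mu> \<Longrightarrow> emeasure \<mu> (T -` B \<inter> space \<mu>) = emeasure \<mu> B"
    and inv_\<pi>: "\<And>B. B \<in> sets \<mu> \<Longrightarrow> emeasure \<pi> (T -` B \<inter> space \<mu>) = emeasure \<pi> B"
    and erg: "\<And>B. B \<in> sets \<mu> \<Longrightarrow> T -` B \<inter> space \<mu> = B \<Longrightarrow> emeasure \<mu> B = 0 \<or> emeasure \<mu> B = 1"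
    and dom: "\<And>B. B \<in> sets \<mu> \<Longrightarrow> emeasure \<pi> B \<le> C * emeasure \<mu> B"
  shows "\<pi> = \<mu>"
proof -
  interpret \<mu>: prob_space \<mu> by fact
  interpret \<pi>: prob_space \<pi> by fact
  have "absolutely_continuous \<mu> \<pi>"
    unfolding absolutely_continuous_def
    using dom sets_eq by (auto intro!: null_setsI dest: dom simp: null_sets_def)
  define h where "h = RN_deriv \<mu> \<pi>"
  have [measurable]: "h \<in> borel_measurable \<mu>" by (simp add: h_def)
  have \<pi>_eq: "\<pi> = density \<mu> h"
    unfolding h_def using \<mu>.density_RN_deriv[OF \<open>absolutely_continuous \<mu> \<pi>\<close> sets_eq] by simp
  define E where "E = {x \<in> space \<mu>. 1 < h x}"
  have [measurable]: "E \<in> sets \<mu>" by (simp add: E_def)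
  have "AE x in \<mu>. T x \<in> E \<longleftrightarrow> x \<in> E"
    using density_superlevel_set_AE_invariant[OF \<mu> _ _ T inv_\<mu>, of h] \<pi> inv_\<pi>
    by (simp add: \<pi>_eq E_def)
  then have "emeasure \<mu> E = 0 \<or> emeasure \<mu> E = 1"
    by (intro ergodic_AE_invariant_set[OF T inv_\<mu> erg]) auto
  moreover have "emeasure \<mu> E \<noteq> 1"
  proof
    assume "emeasure \<mu> E = 1"
    then have "emeasure \<mu> E < emeasure (density \<mu> h) E"
      by (intro emeasure_density_gt_if_gt_1) (auto simp: E_def)
    with \<pi>.emeasure_le_1[of E] \<open>emeasure \<mu> E = 1\<close> show False
      by (simp add: \<pi>_eq)
  qed
  ultimately have "emeasure \<mu> E = 0" by simp
  then have "emeasure \<pi> E = 0"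
    using dom[of E] by simp
  show "\<pi> = \<mu>"
  proof (rule prob_space_eq_if_le[OF \<mu> \<pi> sets_eq])
    fix B assume [measurable]: "B \<in> sets \<mu>"
    have "emeasure \<pi> B = emeasure \<pi> (B - E)"
      using \<open>emeasure \<pi> E = 0\<close> sets_eq by (intro emeasure_Diff_null_set[symmetric] null_setsI) auto
    also have "\<dots> \<le> emeasure \<mu> (B - E)"
      unfolding \<pi>_eq using sets.sets_into_space[of B \<mu>]
      by (intro emeasure_density_le_if_le_1) (auto simp: E_def)
    also have "\<dots> \<le> emeasure \<mu> B" by (rule emeasure_mono) auto
    finally show "emeasure \<pi> B \<le> emeasure \<mu> B" .
  qed
qed

lemma bounded_double_seq_diagonal_convergent:
  fixes v :: "nat \<Rightarrow> nat \<Rightarrow> real"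
  assumes bdd: "\<And>n k. \<bar>v n k\<bar> \<le> B"
  obtains d where "strict_mono d" "\<And>k. convergent (\<lambda>n. v (d n) k)"
proof -
  interpret subseqs "\<lambda>k s. convergent (\<lambda>n. v (s n) k)"
  proof
    fix k and s :: "nat \<Rightarrow> nat"
    have "bounded (range (\<lambda>n. v (s n) k))"
      using bdd by (intro boundedI[of _ B]) auto
    then obtain r where "strict_mono r" "convergent ((\<lambda>n. v (s n) k) \<circ> r)"
      using bounded_imp_convergent_subsequence by (metis convergent_def)
    then show "\<exists>r. strict_mono r \<and> convergent (\<lambda>n. v ((s \<circ> r) n) k)"
      by (auto simp: o_def)
  qed
  have "convergent (\<lambda>n. v (diagseq n) k)" for k
  proof -
    have "convergent (\<lambda>n. v ((diagseq \<circ> (+) (Suc k)) n) k)"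
      by (rule diagseq_holds) (auto simp: o_def intro: convergent_subseq_convergent[unfolded o_def])
    then obtain L where "(\<lambda>n. v (diagseq (n + Suc k)) k) \<longlonglongrightarrow> L"
      by (auto simp: convergent_def o_def add.commute)
    then show ?thesis using LIMSEQ_offset convergent_def by blast
  qed
  then show ?thesis using that subseq_diagseq by blast
qed


locale countable_compact_algebra = algebra \<Omega> A for \<Omega> :: "'a set" and A +
  assumes countable_algebra: "countable A"
    and compact_class: "\<And>C. range C \<subseteq> A \<Longrightarrow> decseq C \<Longrightarrow> (\<Inter>i. C i) = {} \<Longrightarrow> \<exists>n. C n = {}"
begin

definition prob_on_algebra :: "'a measure \<Rightarrow> bool" where
  "prob_on_algebra \<nu> \<longleftrightarrow> prob_space \<nu> \<and> space \<nu> = \<Omega> \<and> sets \<nu> = sigma_sets \<Omega> A"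

definition converges_on_algebra :: "(nat \<Rightarrow> 'a measure) \<Rightarrow> 'a measure \<Rightarrow> bool" where
  "converges_on_algebra s \<nu> \<longleftrightarrow> (\<forall>S\<in>A. (\<lambda>n. measure (s n) S) \<longlonglongrightarrow> measure \<nu> S)"

lemma converges_on_algebra_const:
  assumes "converges_on_algebra s \<nu>" "S \<in> A" "\<And>n. measure (s n) S = c"
  shows "measure \<nu> S = c"
proof -
  have "(\<lambda>n. measure (s n) S) \<longlonglongrightarrow> measure \<nu> S"
    using assms(1,2) by (simp add: converges_on_algebra_def)
  then show ?thesis by (simp add: assms(3) LIMSEQ_const_iff)
qed

lemma converges_on_algebra_eq:
  assumes "converges_on_algebra s \<nu>" "S \<in> A" "S' \<in> A" "\<And>n. measure (s n) S = measure (s n) S'"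
  shows "measure \<nu> S = measure \<nu> S'"
proof -
  have "(\<lambda>n. measure (s n) S) \<longlonglongrightarrow> measure \<nu> S"
    using assms(1,2) by (simp add: converges_on_algebra_def)
  moreover have "(\<lambda>n. measure (s n) S') \<longlonglongrightarrow> measure \<nu> S'"
    using assms(1,3) by (simp add: converges_on_algebra_def)
  ultimately show ?thesis unfolding assms(4) by (rule LIMSEQ_unique)
qed

lemma prob_on_algebra_eqI:
  assumes "prob_on_algebra \<nu>\<^sub>1" "prob_on_algebra \<nu>\<^sub>2" "\<And>S. S \<in> A \<Longrightarrow> measure \<nu>\<^sub>1 S = measure \<nu>\<^sub>2 S"
  shows "\<nu>\<^sub>1 = \<nu>\<^sub>2"
proof -
  interpret \<nu>\<^sub>1: prob_space \<nu>\<^sub>1 using assms(1) by (simp add: prob_on_algebra_def)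
  interpret \<nu>\<^sub>2: prob_space \<nu>\<^sub>2 using assms(2) by (simp add: prob_on_algebra_def)
  have "Int_stable A" by (auto simp: Int_stable_def)
  then show ?thesis
    using assms top space_closed
    by (intro measure_eqI_generator_eq[where A="\<lambda>_. \<Omega>" and E=A and \<Omega>=\<Omega>])
       (auto simp: prob_on_algebra_def \<nu>\<^sub>1.emeasure_eq_measure \<nu>\<^sub>2.emeasure_eq_measure)
qed

text \<open>No continuity hypothesis is needed: by the compact-class property a decreasing sequence
  in \<open>A\<close> with empty intersection is eventually empty.\<close>

lemma prob_on_algebra_extension:
  fixes L :: "'a set \<Rightarrow> real"
  assumes L_nonneg: "\<And>S. S \<in> A \<Longrightarrow> 0 \<le> L S" and "L {} = 0" "L \<Omega> = 1"
    and L_add: "\<And>a b. a \<in> A \<Longrightarrow> b \<in> A \<Longrightarrow> a \<inter> b = {} \<Longrightarrow> L (a \<union> b) = L a + L b"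
  obtains \<nu> where "prob_on_algebra \<nu>" "\<And>S. S \<in> A \<Longrightarrow> measure \<nu> S = L S"
proof -
  define f where "f S = ennreal (L S)" for S
  have "positive A f" "additive A f"
    using \<open>L {} = 0\<close> L_add L_nonneg by (auto simp: positive_def additive_def f_def)
  moreover have "(\<lambda>i. f (C i)) \<longlonglongrightarrow> 0"
    if C: "range C \<subseteq> A" "decseq C" "(\<Inter>i. C i) = {}" for C
  proof -
    obtain N where "C N = {}" using compact_class[OF C] by blast
    then have "C n = {}" if "n \<ge> N" for n using \<open>decseq C\<close> that by (auto simp: decseq_def)
    then show ?thesis
      using \<open>L {} = 0\<close> by (intro tendsto_eventually eventually_sequentiallyI[of N]) (simp add: f_def)
  qed
  ultimately obtain \<mu> where \<mu>: "\<And>S. S \<in> A \<Longrightarrow> \<mu> S = f S" "measure_space \<Omega> (sigma_sets \<Omega> A) \<mu>"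
    using caratheodory_empty_continuous[of f] by (auto simp: f_def)
  define \<nu> where "\<nu> = measure_of \<Omega> A \<mu>"
  have sets_\<nu>: "sets \<nu> = sigma_sets \<Omega> A" and space_\<nu>: "space \<nu> = \<Omega>"
    unfolding \<nu>_def using space_closed by simp_all
  have emeasure_\<nu>: "emeasure \<nu> S = ennreal (L S)" if "S \<in> A" for S
    using \<mu> that emeasure_measure_of[OF \<nu>_def space_closed, of S] sets_\<nu>
    by (auto simp: measure_space_def f_def)
  have "prob_space \<nu>"
    by (intro prob_spaceI) (simp add: space_\<nu> emeasure_\<nu>[OF top] \<open>L \<Omega> = 1\<close>)
  then show ?thesis
    using that sets_\<nu> space_\<nu> emeasure_\<nu> L_nonneg
    by (auto simp: prob_on_algebra_def measure_def)
qed

lemma prob_on_algebra_limit: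
  assumes probs: "\<And>n. prob_on_algebra (s n)"
    and lim: "\<And>S. S \<in> A \<Longrightarrow> (\<lambda>n. measure (s n) S) \<longlonglongrightarrow> L S"
  obtains \<nu> where "prob_on_algebra \<nu>" "\<And>S. S \<in> A \<Longrightarrow> measure \<nu> S = L S"
proof (rule prob_on_algebra_extension)
  have s: "prob_space (s n)" for n using probs by (simp add: prob_on_algebra_def)
  have in_sets: "S \<in> A \<Longrightarrow> S \<in> sets (s n)" for S n
    using probs by (simp add: prob_on_algebra_def)
  show "0 \<le> L S" if "S \<in> A" for S
    using lim[OF that] by (rule LIMSEQ_le_const) simp
  have L_const: "L S = c" if "S \<in> A" "\<And>n. measure (s n) S = c" for S c
  proof -
    have "(\<lambda>n. measure (s n) S) \<longlonglongrightarrow> c" using that(2) by simp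
    then show ?thesis using LIMSEQ_unique[OF lim[OF that(1)]] by simp
  qed
  show "L {} = 0" using L_const[of "{}" 0] by simp
  show "L \<Omega> = 1"
    using L_const[OF top] prob_space.prob_space[OF s] in_sets probs by (simp add: prob_on_algebra_def)
  show "L (a \<union> b) = L a + L b" if "a \<in> A" "b \<in> A" "a \<inter> b = {}" for a b
  proof -
    have "measure (s n) (a \<union> b) = measure (s n) a + measure (s n) b" for n
      using that in_sets finite_measure.finite_measure_Union[OF prob_space.finite_measure[OF s]]
      by simp
    then have "(\<lambda>n. measure (s n) (a \<union> b)) \<longlonglongrightarrow> L a + L b"
      using tendsto_add[OF lim lim] that by simp
    then show ?thesis using lim[of "a \<union> b"] that LIMSEQ_unique by blast
  qed
qed (rule that)

lemma prob_on_algebra_measure_le_1: "prob_on_algebra \<nu> \<Longrightarrow> measure \<nu> S \<le> 1"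
  by (simp add: prob_on_algebra_def prob_space.prob_le_1)

lemma prob_on_algebra_seq_compact:
  fixes s :: "nat \<Rightarrow> 'a measure"
  assumes "\<And>n. prob_on_algebra (s n)"
  obtains d \<nu> where "strict_mono d" "prob_on_algebra \<nu>" "converges_on_algebra (s \<circ> d) \<nu>"
proof -
  have "A \<noteq> {}" using top by blast
  define v where "v n k = measure (s n) (from_nat_into A k)" for n k
  have v_bdd: "\<bar>v n k\<bar> \<le> 1" for n k
    using assms prob_on_algebra_measure_le_1 by (simp add: v_def)
  obtain d where d: "strict_mono d" "\<And>k. convergent (\<lambda>n. v (d n) k)"
    using bounded_double_seq_diagonal_convergent[of v, OF v_bdd] by blast
  have lim: "(\<lambda>n. measure ((s \<circ> d) n) S) \<longlonglongrightarrow> lim (\<lambda>n. measure (s (d n)) S)" if "S \<in> A" for S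
    using d(2)[of "to_nat_on A S"] that countable_algebra
    by (simp add: v_def convergent_LIMSEQ_iff)
  obtain \<nu> where "prob_on_algebra \<nu>" "\<And>S. S \<in> A \<Longrightarrow> measure \<nu> S = lim (\<lambda>n. measure (s (d n)) S)"
    by (rule prob_on_algebra_limit[of "s \<circ> d", OF _ lim]) (simp_all add: assms)
  then show ?thesis
    using that d(1) lim by (auto simp: converges_on_algebra_def)
qed

lemma prob_on_algebra_attains_min:
  fixes \<phi> :: "'a measure \<Rightarrow> real"
  assumes "K \<noteq> {}" and K_probs: "\<And>\<nu>. \<nu> \<in> K \<Longrightarrow> prob_on_algebra \<nu>"
    and K_closed: "\<And>s \<nu>. (\<And>n. s n \<in> K) \<Longrightarrow> prob_on_algebra \<nu> \<Longrightarrow> converges_on_algebra s \<nu> \<Longrightarrow> \<nu> \<in> K"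
    and \<phi>_cont: "\<And>s \<nu>. (\<And>n. s n \<in> K) \<Longrightarrow> prob_on_algebra \<nu> \<Longrightarrow> converges_on_algebra s \<nu>
                        \<Longrightarrow> (\<lambda>n. \<phi> (s n)) \<longlonglongrightarrow> \<phi> \<nu>"
    and \<phi>_bdd: "\<And>\<nu>. \<nu> \<in> K \<Longrightarrow> b \<le> \<phi> \<nu>"
  shows "\<exists>\<nu>\<in>K. \<forall>\<nu>'\<in>K. \<phi> \<nu> \<le> \<phi> \<nu>'"
proof -
  define c where "c = Inf (\<phi> ` K)"
  have bdd: "bdd_below (\<phi> ` K)" using \<phi>_bdd by (intro bdd_belowI[of _ b]) auto
  have "\<exists>\<nu>\<in>K. \<phi> \<nu> < c + 1 / Suc n" for n
    using cInf_less_iff[of "\<phi> ` K" "c + 1 / Suc n"] \<open>K \<noteq> {}\<close> bdd by (simp add: c_def)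
  then obtain s where s: "\<And>n. s n \<in> K" "\<And>n. \<phi> (s n) < c + 1 / Suc n" by metis
  obtain d \<nu> where d: "strict_mono d" "prob_on_algebra \<nu>" "converges_on_algebra (s \<circ> d) \<nu>"
    using prob_on_algebra_seq_compact[of s] s(1) K_probs by blast
  have "(\<lambda>n. \<phi> ((s \<circ> d) n)) \<longlonglongrightarrow> \<phi> \<nu>" using \<phi>_cont[OF _ d(2,3)] s(1) by simp
  moreover have "(\<lambda>n. 1 / real (Suc (d n))) \<longlonglongrightarrow> 0"
    using LIMSEQ_subseq_LIMSEQ[OF LIMSEQ_Suc[OF lim_inverse_n[where 'a=real]] d(1)]
    by (simp add: o_def inverse_eq_divide)
  then have "(\<lambda>n. c + 1 / Suc (d n)) \<longlonglongrightarrow> c"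
    using tendsto_add[OF tendsto_const[of c]] by fastforce
  ultimately have "\<phi> \<nu> \<le> c"
    using s(2) by (intro LIMSEQ_le) (auto intro: less_imp_le)
  moreover have "c \<le> \<phi> \<nu>'" if "\<nu>' \<in> K" for \<nu>'
    using bdd that by (simp add: c_def cInf_lower)
  ultimately show ?thesis
    using K_closed[OF _ d(2,3)] s(1) by force
qed

lemma from_nat_into_algebra: "from_nat_into A k \<in> A"
  using top by (intro from_nat_into) blast

lemma from_nat_into_algebra_surj: "S \<in> A \<Longrightarrow> from_nat_into A (to_nat_on A S) = S"
  using countable_algebra by simp

text \<open>With \<open>from_nat_into A\<close> enumerating \<open>A\<close>, this is a strictly convex functional that is
  continuous for convergence on \<open>A\<close>.\<close>

definition energy :: "'a measure \<Rightarrow> real" where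
  "energy \<nu> = (\<Sum>k. (1/2)^k * (measure \<nu> (from_nat_into A k))\<^sup>2)"

lemma energy_term_le:
  assumes "prob_on_algebra \<nu>"
  shows "norm ((1/2::real)^k * (measure \<nu> (from_nat_into A k))\<^sup>2) \<le> (1/2)^k"
  using prob_on_algebra_measure_le_1[OF assms] by (simp add: power_le_one mult_left_le)

lemma summable_energy:
  "prob_on_algebra \<nu> \<Longrightarrow> summable (\<lambda>k. (1/2::real)^k * (measure \<nu> (from_nat_into A k))\<^sup>2)"
  by (rule summable_comparison_test[OF _ summable_geometric[of "1/2::real"]])
     (use energy_term_le in auto)

lemma energy_le_2: "prob_on_algebra \<nu> \<Longrightarrow> energy \<nu> \<le> 2"
  using suminf_le[OF _ summable_energy summable_geometric[of "1/2::real"]]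
    energy_term_le suminf_geometric[of "1/2::real"]
  by (fastforce simp: energy_def)

lemma energy_tendsto:
  assumes "\<And>n. prob_on_algebra (s n)" "converges_on_algebra s \<nu>"
  shows "(\<lambda>n. energy (s n)) \<longlonglongrightarrow> energy \<nu>"
proof -
  have lim: "(\<lambda>n. (1/2::real)^k * (measure (s n) (from_nat_into A k))\<^sup>2)
               \<longlonglongrightarrow> (1/2)^k * (measure \<nu> (from_nat_into A k))\<^sup>2" for k
    using assms(2) from_nat_into_algebra by (intro tendsto_intros) (auto simp: converges_on_algebra_def)
  have bound: "\<forall>\<^sub>F (k, n) in at_top \<times>\<^sub>F sequentially.
      norm ((1/2::real)^k * (measure (s n) (from_nat_into A k))\<^sup>2) \<le> (1/2)^k"
    using energy_term_le[OF assms(1)] by (intro always_eventually) (simp add: case_prod_beta)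
  have "summable (\<lambda>k. (1/2::real)^k)" by simp
  from tannerys_theorem[OF lim bound this] show ?thesis by (simp add: energy_def)
qed

lemma energy_strictly_convex:
  assumes "prob_on_algebra \<nu>" "prob_on_algebra \<nu>\<^sub>1" "prob_on_algebra \<nu>\<^sub>2" "\<nu>\<^sub>1 \<noteq> \<nu>\<^sub>2" "0 < t" "t < 1"
    and mix: "\<And>S. S \<in> A \<Longrightarrow> measure \<nu> S = t * measure \<nu>\<^sub>1 S + (1 - t) * measure \<nu>\<^sub>2 S"
  shows "energy \<nu> < t * energy \<nu>\<^sub>1 + (1 - t) * energy \<nu>\<^sub>2"
proof -
  define p where "p k = measure \<nu>\<^sub>1 (from_nat_into A k)" for k
  define q where "q k = measure \<nu>\<^sub>2 (from_nat_into A k)" for k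
  obtain k\<^sub>0 where "p k\<^sub>0 \<noteq> q k\<^sub>0"
    using prob_on_algebra_eqI[OF assms(2,3)] from_nat_into_algebra_surj assms(4)
    by (metis p_def q_def)
  have "(\<lambda>k. t * ((1/2)^k * (p k)\<^sup>2) + (1 - t) * ((1/2)^k * (q k)\<^sup>2) - (1/2)^k * (t * p k + (1 - t) * q k)\<^sup>2)
          sums (t * energy \<nu>\<^sub>1 + (1 - t) * energy \<nu>\<^sub>2 - energy \<nu>)"
    using summable_energy[THEN summable_sums, OF assms(1)] summable_energy[THEN summable_sums, OF assms(2)]
      summable_energy[THEN summable_sums, OF assms(3)]
    by (intro sums_diff sums_add sums_mult) (simp_all add: energy_def p_def q_def mix from_nat_into_algebra)
  moreover have "t * ((1/2)^k * (p k)\<^sup>2) + (1 - t) * ((1/2)^k * (q k)\<^sup>2) - (1/2)^k * (t * p k + (1 - t) * q k)\<^sup>2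
      = (1/2)^k * t * (1 - t) * (p k - q k)\<^sup>2" for k :: nat
    by (simp add: power2_eq_square algebra_simps)
  ultimately have gap: "(\<lambda>k. (1/2)^k * t * (1 - t) * (p k - q k)\<^sup>2)
      sums (t * energy \<nu>\<^sub>1 + (1 - t) * energy \<nu>\<^sub>2 - energy \<nu>)"
    by simp
  have "0 < (\<Sum>k. (1/2::real)^k * t * (1 - t) * (p k - q k)\<^sup>2)"
    using assms(5,6) \<open>p k\<^sub>0 \<noteq> q k\<^sub>0\<close>
    by (intro suminf_pos2[of _ k\<^sub>0] sums_summable[OF gap]) auto
  then show ?thesis using sums_unique[OF gap] by simp
qed

end

definition cylinder_sets :: "'p set \<Rightarrow> (nat \<Rightarrow> 'p \<Rightarrow> 'q) \<Rightarrow> 'p set set" where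
  "cylinder_sets \<Omega> R = (\<Union>n. range (\<lambda>S. {p \<in> \<Omega>. R n p \<in> S}))"

lemma cylinder_sets_iff: "C \<in> cylinder_sets \<Omega> R \<longleftrightarrow> (\<exists>n S. C = {p \<in> \<Omega>. R n p \<in> S})"
  by (auto simp: cylinder_sets_def)

lemma cylinder_setsI: "C = {p \<in> \<Omega>. R n p \<in> S} \<Longrightarrow> C \<in> cylinder_sets \<Omega> R"
  by (auto simp: cylinder_sets_def)

lemma vimage_cylinder_sets:
  assumes f: "f \<in> \<Omega> \<rightarrow> \<Omega>'" and factor: "\<And>n. \<exists>m g. \<forall>p\<in>\<Omega>. R' n (f p) = g (R m p)"
    and C: "C \<in> cylinder_sets \<Omega>' R'"
  shows "f -` C \<inter> \<Omega> \<in> cylinder_sets \<Omega> R"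
proof -
  obtain n S where "C = {p \<in> \<Omega>'. R' n p \<in> S}" using C by (auto simp: cylinder_sets_iff)
  moreover obtain m g where "\<forall>p\<in>\<Omega>. R' n (f p) = g (R m p)" using factor by blast
  ultimately have "f -` C \<inter> \<Omega> = {p \<in> \<Omega>. R m p \<in> g -` S}" using f by auto
  then show ?thesis by (rule cylinder_setsI)
qed

lemma countable_cylinder_sets:
  assumes "\<And>n. finite (R n ` \<Omega>)"
  shows "countable (cylinder_sets \<Omega> R)"
proof -
  have "range (\<lambda>S. {p \<in> \<Omega>. R n p \<in> S}) = (\<lambda>S. {p \<in> \<Omega>. R n p \<in> S}) ` Pow (R n ` \<Omega>)" for n
    by (auto intro!: image_eqI[where x="_ \<inter> R n ` \<Omega>"])
  then show ?thesis
    unfolding cylinder_sets_def using assms by (intro countable_UN) (auto intro: countable_finite)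
qed

locale refining_family =
  fixes \<Omega> :: "'p set" and R :: "nat \<Rightarrow> 'p \<Rightarrow> 'q"
  assumes refines: "\<And>m n. m \<le> n \<Longrightarrow> \<exists>g. \<forall>p\<in>\<Omega>. R m p = g (R n p)"
begin

lemma cylinder_sets_common_index:
  assumes "C \<in> cylinder_sets \<Omega> R" "D \<in> cylinder_sets \<Omega> R"
  obtains n S S' where "C = {p \<in> \<Omega>. R n p \<in> S}" "D = {p \<in> \<Omega>. R n p \<in> S'}"
proof -
  have lift: "\<exists>S'. {p \<in> \<Omega>. R m p \<in> S} = {p \<in> \<Omega>. R n p \<in> S'}" if mn: "m \<le> n" for m n S
  proof -
    obtain g where "\<forall>p\<in>\<Omega>. R m p = g (R n p)" using refines[OF mn] by blast
    then show ?thesis by (intro exI[of _ "g -` S"]) auto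
  qed
  obtain m S n S' where "C = {p \<in> \<Omega>. R m p \<in> S}" "D = {p \<in> \<Omega>. R n p \<in> S'}"
    using assms by (auto simp: cylinder_sets_iff)
  then show ?thesis
    using lift[of m "max m n" S] lift[of n "max m n" S'] that by auto
qed

lemma algebra_cylinder_sets: "algebra \<Omega> (cylinder_sets \<Omega> R)"
proof -
  have "C \<union> D \<in> cylinder_sets \<Omega> R" "C - D \<in> cylinder_sets \<Omega> R"
    if CD: "C \<in> cylinder_sets \<Omega> R" "D \<in> cylinder_sets \<Omega> R" for C D
  proof -
    obtain n S S' where "C = {p \<in> \<Omega>. R n p \<in> S}" "D = {p \<in> \<Omega>. R n p \<in> S'}"
      using cylinder_sets_common_index[OF CD] .
    then have "C \<union> D = {p \<in> \<Omega>. R n p \<in> S \<union> S'}" "C - D = {p \<in> \<Omega>. R n p \<in> S - S'}"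
      by auto
    then show "C \<union> D \<in> cylinder_sets \<Omega> R" "C - D \<in> cylinder_sets \<Omega> R"
      by (auto intro: cylinder_setsI)
  qed
  moreover have "{} \<in> cylinder_sets \<Omega> R" "\<Omega> \<in> cylinder_sets \<Omega> R"
    by (auto intro: cylinder_setsI[where S="{}" and n=0] cylinder_setsI[where S=UNIV and n=0])
  ultimately show ?thesis
    unfolding algebra_iff_Un by (auto simp: cylinder_sets_def)
qed

context
  fixes T :: "'p topology"
  assumes topspace: "topspace T = \<Omega>"
    and openin_fibre: "\<And>n p. p \<in> \<Omega> \<Longrightarrow> openin T {q \<in> \<Omega>. R n q = R n p}"
begin

lemma openin_cylinder_sets:
  assumes "C \<in> cylinder_sets \<Omega> R"
  shows "openin T C"
proof -
  obtain n S where C: "C = {p \<in> \<Omega>. R n p \<in> S}" using assms by (auto simp: cylinder_sets_iff)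
  then have "{q \<in> \<Omega>. R n q = R n p} \<subseteq> C" if "p \<in> C" for p using that by auto
  then show ?thesis
    using openin_fibre C by (subst openin_subopen) blast
qed

lemma sets_borel_of_eq_cylinder_sets:
  assumes finite: "\<And>n. finite (R n ` \<Omega>)"
    and fibre_base: "\<And>U p. openin T U \<Longrightarrow> p \<in> U \<Longrightarrow> \<exists>n. {q \<in> \<Omega>. R n q = R n p} \<subseteq> U"
  shows "sets (borel_of T) = sigma_sets \<Omega> (cylinder_sets \<Omega> R)"
proof -
  have "sets (borel_of T) = sigma_sets \<Omega> {U. openin T U}"
    unfolding borel_of_def topspace[symmetric] by (rule sets_measure_of) (auto dest: openin_subset)
  also have "\<dots> = sigma_sets \<Omega> (cylinder_sets \<Omega> R)"
  proof (intro sigma_sets_eqI)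
    fix U assume "U \<in> {U. openin T U}"
    have "U \<subseteq> \<Union>{C \<in> cylinder_sets \<Omega> R. C \<subseteq> U}"
    proof
      fix p assume "p \<in> U"
      then obtain n where "{q \<in> \<Omega>. R n q = R n p} \<subseteq> U"
        using fibre_base \<open>U \<in> {U. openin T U}\<close> by blast
      moreover have "{q \<in> \<Omega>. R n q = R n p} \<in> cylinder_sets \<Omega> R"
        by (rule cylinder_setsI[where S="{R n p}"]) simp
      moreover have "p \<in> \<Omega>"
        using \<open>p \<in> U\<close> \<open>U \<in> {U. openin T U}\<close> openin_subset topspace by blast
      ultimately show "p \<in> \<Union>{C \<in> cylinder_sets \<Omega> R. C \<subseteq> U}" by blast
    qed
    then have "U = \<Union>{C \<in> cylinder_sets \<Omega> R. C \<subseteq> U}" by blast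
    moreover have "\<Union>{C \<in> cylinder_sets \<Omega> R. C \<subseteq> U} \<in> sigma_sets \<Omega> (cylinder_sets \<Omega> R)"
      using countable_cylinder_sets[OF finite] by (intro sigma_sets_UNION) auto
    ultimately show "U \<in> sigma_sets \<Omega> (cylinder_sets \<Omega> R)" by simp
  qed (auto intro: openin_cylinder_sets)
  finally show ?thesis .
qed

lemma countable_compact_algebra_cylinder_sets:
  assumes "\<And>n. finite (R n ` \<Omega>)" and "compact_space T"
  shows "countable_compact_algebra \<Omega> (cylinder_sets \<Omega> R)"
proof -
  interpret algebra \<Omega> "cylinder_sets \<Omega> R" by (rule algebra_cylinder_sets)
  have closed: "closedin T C" if "C \<in> cylinder_sets \<Omega> R" for C
    using openin_cylinder_sets[OF compl_sets[OF that]] sets_into_space[OF that] topspace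
    by (simp add: closedin_def)
  show ?thesis
  proof (intro countable_compact_algebra.intro countable_compact_algebra_axioms.intro)
    fix C :: "nat \<Rightarrow> 'p set"
    assume C: "range C \<subseteq> cylinder_sets \<Omega> R" "decseq C" "(\<Inter>i. C i) = {}"
    show "\<exists>n. C n = {}"
    proof (rule ccontr)
      assume "\<nexists>n. C n = {}"
      then have "(\<Inter>i. C i) \<noteq> {}"
        using compact_space_imp_nest[OF \<open>compact_space T\<close>] closed C(1,2) by blast
      with C(3) show False by simp
    qed
  qed (simp_all add: algebra_cylinder_sets countable_cylinder_sets assms(1))
qed

end

end

definition window :: "nat \<Rightarrow> (int \<Rightarrow> 'a) \<Rightarrow> (int \<Rightarrow> 'a)" where
  "window n x = restrict x {- int n .. int n}"

lemma window_eq_iff: "window n z = window n x \<longleftrightarrow> (\<forall>i. \<bar>i\<bar> \<le> int n \<longrightarrow> z i = x i)"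
  by (auto simp: window_def restrict_def fun_eq_iff abs_le_iff)

lemma window_window: "m \<le> n \<Longrightarrow> window m (window n x) = window m x"
  by (auto simp: window_def restrict_def fun_eq_iff)

lemma window_lshift: "window n (lshift x) = restrict (\<lambda>i. window (Suc n) x (i + 1)) {- int n .. int n}"
  by (auto simp: window_def lshift_def restrict_def fun_eq_iff)

lemma refining_family_window: "refining_family \<Omega> window"
proof
  fix m n :: nat assume "m \<le> n"
  then show "\<exists>g. \<forall>p\<in>\<Omega>. window m p = g (window n p)"
    by (intro exI[of _ "window m"]) (simp add: window_window)
qed

lemma refining_family_window_pair: "refining_family \<Omega> (\<lambda>n. map_prod (window n) (window n))"
proof
  fix m n :: nat assume "m \<le> n"
  then show "\<exists>g. \<forall>p\<in>\<Omega>. map_prod (window m) (window m) p = g (map_prod (window n) (window n) p)"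
    by (intro exI[of _ "map_prod (window m) (window m)"]) (simp add: window_window map_prod_def split_beta)
qed

lemma topspace_full_shift_top: "topspace (full_shift_top \<Sigma>) = {x. \<forall>i. x i \<in> \<Sigma>}"
  by (auto simp: full_shift_top_def PiE_def extensional_def)

lemma finite_window_image:
  assumes "finite \<Sigma>" "Z \<subseteq> topspace (full_shift_top \<Sigma>)"
  shows "finite (window n ` Z)"
proof (rule finite_subset)
  show "window n ` Z \<subseteq> PiE {- int n .. int n} (\<lambda>_. \<Sigma>)"
    using assms(2) by (auto simp: window_def topspace_full_shift_top)
qed (simp add: assms(1) finite_PiE)

lemma openin_window_fibre:
  assumes "Z \<subseteq> topspace (full_shift_top \<Sigma>)" "x \<in> Z"
  shows "openin (subtopology (full_shift_top \<Sigma>) Z) {z \<in> Z. window n z = window n x}"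
proof -
  define U where "U i = (if \<bar>i\<bar> \<le> int n then {x i} else \<Sigma>)" for i
  have "{i. U i \<noteq> \<Sigma>} \<subseteq> {- int n .. int n}" by (auto simp: U_def)
  then have "finite {i. U i \<noteq> \<Sigma>}" by (rule finite_subset) simp
  moreover have "x i \<in> \<Sigma>" for i using assms by (auto simp: topspace_full_shift_top)
  ultimately have "openin (full_shift_top \<Sigma>) (PiE UNIV U)"
    unfolding full_shift_top_def by (subst openin_PiE_gen) (auto simp: U_def)
  moreover have "{z \<in> Z. window n z = window n x} = PiE UNIV U \<inter> Z"
  proof (intro equalityI subsetI)
    fix z assume "z \<in> {z \<in> Z. window n z = window n x}"
    then show "z \<in> PiE UNIV U \<inter> Z"
      using assms(1) by (auto simp: window_eq_iff U_def topspace_full_shift_top)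
  next
    fix z assume z: "z \<in> PiE UNIV U \<inter> Z"
    have "z i = x i" if "\<bar>i\<bar> \<le> int n" for i
    proof -
      have "z i \<in> U i" using z by (auto simp: PiE_iff)
      then show ?thesis using that by (simp add: U_def)
    qed
    then show "z \<in> {z \<in> Z. window n z = window n x}"
      using z by (simp add: window_eq_iff)
  qed
  ultimately show ?thesis by (auto simp: openin_subtopology)
qed

lemma window_fibre_subset_openin:
  assumes "Z \<subseteq> topspace (full_shift_top \<Sigma>)" "openin (subtopology (full_shift_top \<Sigma>) Z) U" "x \<in> U"
  shows "\<exists>n. {z \<in> Z. window n z = window n x} \<subseteq> U"
proof -
  obtain V where V: "openin (full_shift_top \<Sigma>) V" "U = V \<inter> Z"
    using assms(2) by (auto simp: openin_subtopology)
  have "x \<in> V" using V(2) assms(3) by blast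
  moreover have "\<forall>x\<in>V. \<exists>W. finite {i \<in> UNIV. W i \<noteq> topspace (discrete_topology \<Sigma>)}
      \<and> (\<forall>i\<in>UNIV. openin (discrete_topology \<Sigma>) (W i)) \<and> x \<in> PiE UNIV W \<and> PiE UNIV W \<subseteq> V"
    using V(1) unfolding full_shift_top_def openin_product_topology_alt .
  ultimately obtain W where W: "finite {i \<in> UNIV. W i \<noteq> topspace (discrete_topology \<Sigma>)}"
      "x \<in> PiE UNIV W" "PiE UNIV W \<subseteq> V"
    by blast
  have "finite {i. W i \<noteq> \<Sigma>}" using W(1) by simp
  from finite_nat_bounded[OF finite_imageI[OF this]]
  obtain n where n: "(\<lambda>i. nat \<bar>i\<bar>) ` {i. W i \<noteq> \<Sigma>} \<subseteq> {..<n}" ..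
  have bound: "\<bar>i\<bar> \<le> int n" if "W i \<noteq> \<Sigma>" for i
  proof -
    have "nat \<bar>i\<bar> < n" using subsetD[OF n, of "nat \<bar>i\<bar>"] that by simp
    then show ?thesis by linarith
  qed
  have "z \<in> PiE UNIV W" if z: "z \<in> Z" "window n z = window n x" for z
  proof -
    have "z i \<in> W i" for i
    proof (cases "W i = \<Sigma>")
      case True
      then show ?thesis using z(1) assms(1) by (auto simp: topspace_full_shift_top)
    next
      case False
      then have "z i = x i" using z(2) bound[OF False] unfolding window_eq_iff by blast
      then show ?thesis using W(2) by (simp add: PiE_iff)
    qed
    then show ?thesis by (simp add: PiE_iff)
  qed
  then have "{z \<in> Z. window n z = window n x} \<subseteq> PiE UNIV W" by blast
  then show ?thesis using W(3) V(2) by blast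
qed

locale shift_extensions =
  fixes \<Sigma> :: "'a set" and X Y :: "(int \<Rightarrow> 'a) set" and \<mu> :: "(int \<Rightarrow> 'a) measure"
  assumes finite_alphabet: "finite \<Sigma>"
    and shift_space_X: "shift_space \<Sigma> X" and shift_space_Y: "shift_space \<Sigma> Y"
    and ergodic_\<mu>: "ergodic_borel_prob (subtopology (full_shift_top \<Sigma>) Y) lshift \<mu>"
begin

abbreviation "T\<^sub>X \<equiv> subtopology (full_shift_top \<Sigma>) X"
abbreviation "T\<^sub>Y \<equiv> subtopology (full_shift_top \<Sigma>) Y"
abbreviation "window_pair n \<equiv> map_prod (window n) (window n)"
abbreviation "cyl\<^sub>Y \<equiv> cylinder_sets Y window"
abbreviation "cyl\<^sub>X\<^sub>Y \<equiv> cylinder_sets (X \<times> Y) window_pair"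

lemma X_subset: "X \<subseteq> topspace (full_shift_top \<Sigma>)"
  and Y_subset: "Y \<subseteq> topspace (full_shift_top \<Sigma>)"
  using shift_space_X shift_space_Y by (auto simp: shift_space_def closedin_subset)

lemma lshift_X: "x \<in> X \<Longrightarrow> lshift x \<in> X"
  and lshift_Y: "y \<in> Y \<Longrightarrow> lshift y \<in> Y"
  using shift_space_X shift_space_Y by (auto simp: shift_space_def)

lemma topspace_XY: "topspace (prod_topology T\<^sub>X T\<^sub>Y) = X \<times> Y"
  using X_subset Y_subset by auto

lemma finite_window_pair_image: "finite (window_pair n ` (X \<times> Y))"
  using finite_window_image[OF finite_alphabet X_subset] finite_window_image[OF finite_alphabet Y_subset]
  by (auto simp: map_prod_surj_on intro: finite_subset[of _ "window n ` X \<times> window n ` Y"])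

lemma openin_window_pair_fibre:
  assumes "p \<in> X \<times> Y"
  shows "openin (prod_topology T\<^sub>X T\<^sub>Y) {q \<in> X \<times> Y. window_pair n q = window_pair n p}"
proof -
  have "{q \<in> X \<times> Y. window_pair n q = window_pair n p}
      = {x \<in> X. window n x = window n (fst p)} \<times> {y \<in> Y. window n y = window n (snd p)}"
    by (auto simp: map_prod_def split_beta)
  then show ?thesis
    using assms openin_window_fibre[OF X_subset] openin_window_fibre[OF Y_subset]
    by (auto simp: openin_prod_Times_iff)
qed

lemma window_pair_fibre_subset_openin:
  assumes "openin (prod_topology T\<^sub>X T\<^sub>Y) W" "p \<in> W"
  shows "\<exists>n. {q \<in> X \<times> Y. window_pair n q = window_pair n p} \<subseteq> W"
proof -
  obtain U V where UV: "openin T\<^sub>X U" "openin T\<^sub>Y V" "fst p \<in> U" "snd p \<in> V" "U \<times> V \<subseteq> W"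
    using assms unfolding openin_prod_topology_alt by (metis prod.collapse)
  obtain m n where "{x \<in> X. window m x = window m (fst p)} \<subseteq> U" "{y \<in> Y. window n y = window n (snd p)} \<subseteq> V"
    using window_fibre_subset_openin[OF X_subset UV(1,3)] window_fibre_subset_openin[OF Y_subset UV(2,4)]
    by blast
  then have "{q \<in> X \<times> Y. window_pair (max m n) q = window_pair (max m n) p} \<subseteq> U \<times> V"
    by (auto simp: map_prod_def split_beta window_eq_iff)
  then show ?thesis using UV(5) by blast
qed

lemma sets_borel_of_XY: "sets (borel_of (prod_topology T\<^sub>X T\<^sub>Y)) = sigma_sets (X \<times> Y) cyl\<^sub>X\<^sub>Y"
  using refining_family.sets_borel_of_eq_cylinder_sets[OF refining_family_window_pair topspace_XY]
    openin_window_pair_fibre window_pair_fibre_subset_openin finite_window_pair_image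
  by blast

lemma sets_borel_of_Y: "sets (borel_of T\<^sub>Y) = sigma_sets Y cyl\<^sub>Y"
proof -
  have "topspace T\<^sub>Y = Y" using Y_subset by auto
  then show ?thesis
    using refining_family.sets_borel_of_eq_cylinder_sets[OF refining_family_window]
      openin_window_fibre[OF Y_subset] window_fibre_subset_openin[OF Y_subset]
      finite_window_image[OF finite_alphabet Y_subset]
    by blast
qed

lemma compact_space_XY: "compact_space (prod_topology T\<^sub>X T\<^sub>Y)"
proof -
  have "compact_space (full_shift_top \<Sigma>)"
    using finite_alphabet
    by (simp add: full_shift_top_def compact_space_product_topology compact_space_discrete_topology)
  then show ?thesis
    using shift_space_X shift_space_Y
    by (simp add: shift_space_def compact_space_prod_topology compact_space_subtopology closedin_compact_space)
qed

sublocale countable_compact_algebra "X \<times> Y" cyl\<^sub>X\<^sub>Y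
  using refining_family.countable_compact_algebra_cylinder_sets[OF refining_family_window_pair topspace_XY]
    openin_window_pair_fibre finite_window_pair_image compact_space_XY
  by blast

lemma sets_\<mu>: "sets \<mu> = sigma_sets Y cyl\<^sub>Y"
  and space_\<mu>: "space \<mu> = Y"
  and prob_space_\<mu>: "prob_space \<mu>"
  and invariant_\<mu>: "\<And>B. B \<in> sets \<mu> \<Longrightarrow> emeasure \<mu> (lshift -` B \<inter> space \<mu>) = emeasure \<mu> B"
  and ergodic_\<mu>': "\<And>B. B \<in> sets \<mu> \<Longrightarrow> lshift -` B \<inter> space \<mu> = B \<Longrightarrow> emeasure \<mu> B = 0 \<or> emeasure \<mu> B = 1"
  using ergodic_\<mu> sets_borel_of_Y Y_subset
  unfolding ergodic_borel_prob_def invariant_borel_prob_def by auto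

lemma cylinder_sets_Y_subset: "cyl\<^sub>Y \<subseteq> Pow Y"
  by (auto simp: cylinder_sets_def)

lemma lshift_vimage_cylinder_sets_Y:
  assumes "B \<in> cyl\<^sub>Y"
  shows "lshift -` B \<inter> Y \<in> cyl\<^sub>Y"
proof (rule vimage_cylinder_sets[OF _ _ assms])
  show "lshift \<in> Y \<rightarrow> Y" using lshift_Y by blast
  fix n
  define g where "g u = restrict (\<lambda>i. u (i + 1)) {- int n .. int n}" for u :: "int \<Rightarrow> 'a"
  have "\<forall>y\<in>Y. window n (lshift y) = g (window (Suc n) y)"
    by (simp add: window_lshift g_def)
  then show "\<exists>m h. \<forall>y\<in>Y. window n (lshift y) = h (window m y)" by blast
qed

lemma lshift2_vimage_cylinder_sets_XY:
  assumes "C \<in> cyl\<^sub>X\<^sub>Y"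
  shows "lshift2 -` C \<inter> (X \<times> Y) \<in> cyl\<^sub>X\<^sub>Y"
proof (rule vimage_cylinder_sets[OF _ _ assms])
  show "lshift2 \<in> X \<times> Y \<rightarrow> X \<times> Y" using lshift_X lshift_Y by (auto simp: lshift2_def)
  fix n
  define g where "g u = restrict (\<lambda>i. u (i + 1)) {- int n .. int n}" for u :: "int \<Rightarrow> 'a"
  have "\<forall>p\<in>X \<times> Y. window_pair n (lshift2 p) = map_prod g g (window_pair (Suc n) p)"
    by (simp add: lshift2_def window_lshift g_def map_prod_def split_beta)
  then show "\<exists>m h. \<forall>p\<in>X \<times> Y. window_pair n (lshift2 p) = h (window_pair m p)" by blast
qed

lemma Times_cylinder_sets_Y:
  assumes "B \<in> cyl\<^sub>Y"
  shows "X \<times> B \<in> cyl\<^sub>X\<^sub>Y"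
proof -
  have "snd -` B \<inter> (X \<times> Y) \<in> cyl\<^sub>X\<^sub>Y"
  proof (rule vimage_cylinder_sets[OF _ _ assms])
    show "snd \<in> X \<times> Y \<rightarrow> Y" by auto
    show "\<exists>m g. \<forall>p\<in>X \<times> Y. window n (snd p) = g (window_pair m p)" for n
      by (intro exI[of _ n] exI[of _ snd]) simp
  qed
  moreover have "snd -` B \<inter> (X \<times> Y) = X \<times> B"
    using assms cylinder_sets_Y_subset by auto
  ultimately show ?thesis by simp
qed

lemma disagreement_cylinder: "{(x, y) \<in> X \<times> Y. x 0 \<noteq> y 0} \<in> cyl\<^sub>X\<^sub>Y"
  by (rule cylinder_setsI[where n=0 and S="{(u, v). u 0 \<noteq> v 0}"]) (auto simp: window_def)

lemma extensions_iff: "\<nu> \<in> extensions \<Sigma> X Y \<mu> \<longleftrightarrow> prob_on_algebra \<nu> \<and>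
    (\<forall>B\<in>sets \<nu>. emeasure \<nu> (lshift2 -` B \<inter> space \<nu>) = emeasure \<nu> B) \<and>
    (\<forall>B\<in>sets \<mu>. emeasure \<nu> (X \<times> B) = emeasure \<mu> B)"
  unfolding extensions_def invariant_borel_prob_def prob_on_algebra_def sets_borel_of_XY topspace_XY
  by auto

lemma measurable_lshift2: "prob_on_algebra \<nu> \<Longrightarrow> lshift2 \<in> measurable \<nu> \<nu>"
  using lshift_X lshift_Y lshift2_vimage_cylinder_sets_XY space_closed
  by (intro measurable_sigma_sets[of \<nu> "X \<times> Y" cyl\<^sub>X\<^sub>Y])
     (auto simp: prob_on_algebra_def lshift2_def)

lemma measurable_snd_\<mu>: "prob_on_algebra \<nu> \<Longrightarrow> snd \<in> measurable \<nu> \<mu>"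
proof (rule measurable_sigma_sets[OF sets_\<mu> cylinder_sets_Y_subset])
  assume \<nu>: "prob_on_algebra \<nu>"
  then show "snd \<in> space \<nu> \<rightarrow> Y" by (auto simp: prob_on_algebra_def)
  fix B assume "B \<in> cyl\<^sub>Y"
  then have "snd -` B \<inter> space \<nu> = X \<times> B" "X \<times> B \<in> cyl\<^sub>X\<^sub>Y"
    using \<nu> cylinder_sets_Y_subset Times_cylinder_sets_Y by (auto simp: prob_on_algebra_def)
  then show "snd -` B \<inter> space \<nu> \<in> sets \<nu>"
    using \<nu> by (auto simp: prob_on_algebra_def)
qed

lemma measurable_lshift_\<mu>: "lshift \<in> measurable \<mu> \<mu>"
  using lshift_Y lshift_vimage_cylinder_sets_Y
  by (intro measurable_sigma_sets[OF sets_\<mu> cylinder_sets_Y_subset]) (auto simp: space_\<mu> sets_\<mu>)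

lemma measure_eq_\<mu>I:
  assumes "prob_space M" "sets M = sets \<mu>" "\<And>B. B \<in> cyl\<^sub>Y \<Longrightarrow> emeasure M B = emeasure \<mu> B"
  shows "M = \<mu>"
proof -
  interpret M: prob_space M by fact
  interpret \<mu>: prob_space \<mu> by (rule prob_space_\<mu>)
  have "algebra Y cyl\<^sub>Y"
    by (rule refining_family.algebra_cylinder_sets[OF refining_family_window])
  then have "Int_stable cyl\<^sub>Y" "Y \<in> cyl\<^sub>Y"
    by (auto simp: Int_stable_def algebra_iff_Int)
  then show ?thesis
    using assms cylinder_sets_Y_subset sets_\<mu>
    by (intro measure_eqI_generator_eq[where A="\<lambda>_. Y" and E=cyl\<^sub>Y and \<Omega>=Y]) auto
qed

lemma vimage_snd_space:
  assumes "prob_on_algebra \<nu>" "B \<in> sets \<mu>"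
  shows "snd -` B \<inter> space \<nu> = X \<times> B"
  using assms sets.sets_into_space[OF assms(2)] space_\<mu> by (auto simp: prob_on_algebra_def)

lemma emeasure_distr_snd:
  assumes "prob_on_algebra \<nu>" "B \<in> sets \<mu>"
  shows "emeasure (distr \<nu> \<mu> snd) B = emeasure \<nu> (X \<times> B)"
  using emeasure_distr[OF measurable_snd_\<mu>[OF assms(1)] assms(2)] vimage_snd_space[OF assms] by simp

lemma distr_snd_eq_\<mu>_iff:
  assumes "prob_on_algebra \<nu>"
  shows "distr \<nu> \<mu> snd = \<mu> \<longleftrightarrow> (\<forall>B\<in>sets \<mu>. emeasure \<nu> (X \<times> B) = emeasure \<mu> B)"
  using emeasure_distr_snd[OF assms] by (metis emeasure_distr_snd[OF assms] measure_eqI sets_distr)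

lemma extensions_closed:
  assumes ext: "\<And>n. s n \<in> extensions \<Sigma> X Y \<mu>" and \<nu>: "prob_on_algebra \<nu>"
    and conv: "converges_on_algebra s \<nu>"
  shows "\<nu> \<in> extensions \<Sigma> X Y \<mu>"
proof -
  interpret \<nu>: prob_space \<nu> using \<nu> by (simp add: prob_on_algebra_def)
  interpret \<mu>: prob_space \<mu> by (rule prob_space_\<mu>)
  have probs: "prob_on_algebra (s n)" for n using ext extensions_iff by blast
  have "distr \<nu> \<nu> lshift2 = \<nu>"
  proof (rule prob_on_algebra_eqI)
    show "prob_on_algebra (distr \<nu> \<nu> lshift2)"
      using \<nu> \<nu>.prob_space_distr[OF measurable_lshift2[OF \<nu>]] by (simp add: prob_on_algebra_def)
    fix C assume C: "C \<in> cyl\<^sub>X\<^sub>Y"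
    have "measure (s n) (lshift2 -` C \<inter> (X \<times> Y)) = measure (s n) C" for n
      using ext[of n] C probs[of n] by (auto simp: extensions_iff prob_on_algebra_def measure_def)
    then have "measure \<nu> (lshift2 -` C \<inter> (X \<times> Y)) = measure \<nu> C"
      by (rule converges_on_algebra_eq[OF conv lshift2_vimage_cylinder_sets_XY[OF C] C])
    then show "measure (distr \<nu> \<nu> lshift2) C = measure \<nu> C"
      using C \<nu> by (simp add: measure_distr measurable_lshift2 prob_on_algebra_def)
  qed fact
  then have inv: "\<forall>B\<in>sets \<nu>. emeasure \<nu> (lshift2 -` B \<inter> space \<nu>) = emeasure \<nu> B"
    using emeasure_distr[OF measurable_lshift2[OF \<nu>]] by metis
  have "distr \<nu> \<mu> snd = \<mu>"
  proof (rule measure_eq_\<mu>I)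
    show "prob_space (distr \<nu> \<mu> snd)" by (rule \<nu>.prob_space_distr[OF measurable_snd_\<mu>[OF \<nu>]])
    fix B assume B: "B \<in> cyl\<^sub>Y"
    have "measure (s n) (X \<times> B) = measure \<mu> B" for n
      using ext[of n] B sets_\<mu> by (auto simp: extensions_iff measure_def)
    then have "measure \<nu> (X \<times> B) = measure \<mu> B"
      by (rule converges_on_algebra_const[OF conv Times_cylinder_sets_Y[OF B]])
    then show "emeasure (distr \<nu> \<mu> snd) B = emeasure \<mu> B"
      using B sets_\<mu> emeasure_distr_snd[OF \<nu>]
      by (simp add: \<nu>.emeasure_eq_measure \<mu>.emeasure_eq_measure)
  qed simp
  then have marginal: "\<forall>B\<in>sets \<mu>. emeasure \<nu> (X \<times> B) = emeasure \<mu> B"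
    by (simp add: distr_snd_eq_\<mu>_iff[OF \<nu>])
  show ?thesis using \<nu> inv marginal extensions_iff by blast
qed

lemma uniform_measure_extension:
  assumes \<nu>_ext: "\<nu> \<in> extensions \<Sigma> X Y \<mu>" and A: "A \<in> sets \<nu>" "lshift2 -` A \<inter> space \<nu> = A"
    and "emeasure \<nu> A \<noteq> 0"
  shows "uniform_measure \<nu> A \<in> extensions \<Sigma> X Y \<mu>"
proof -
  have \<nu>: "prob_on_algebra \<nu>"
    and inv: "\<And>B. B \<in> sets \<nu> \<Longrightarrow> emeasure \<nu> (lshift2 -` B \<inter> space \<nu>) = emeasure \<nu> B"
    and marginal: "\<And>B. B \<in> sets \<mu> \<Longrightarrow> emeasure \<nu> (X \<times> B) = emeasure \<mu> B"
    using \<nu>_ext by (auto simp: extensions_iff)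
  interpret \<nu>: prob_space \<nu> using \<nu> by (simp add: prob_on_algebra_def)
  define U where "U = uniform_measure \<nu> A"
  have U: "prob_on_algebra U"
    using \<nu> \<open>emeasure \<nu> A \<noteq> 0\<close> by (simp add: U_def prob_on_algebra_def prob_space_uniform_measure)
  have emeasure_U: "emeasure U B = emeasure \<nu> (A \<inter> B) / emeasure \<nu> A" if "B \<in> sets \<nu>" for B
    using A(1) that by (simp add: U_def)
  have inv_U: "emeasure U (lshift2 -` B \<inter> space U) = emeasure U B" if "B \<in> sets \<nu>" for B
    using emeasure_uniform_measure_vimage[OF measurable_lshift2[OF \<nu>] inv A(1,2) that]
    by (simp add: U_def)
  have "distr U \<mu> snd = \<mu>"
  proof (rule invariant_prob_eq_if_dominated_by_ergodic
      [OF prob_space_\<mu> _ _ measurable_lshift_\<mu> invariant_\<mu> _ ergodic_\<mu>'])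
    show "prob_space (distr U \<mu> snd)"
      using U measurable_snd_\<mu> by (simp add: prob_on_algebra_def prob_space.prob_space_distr)
    fix B assume B: "B \<in> sets \<mu>"
    have B': "lshift -` B \<inter> space \<mu> \<in> sets \<mu>" using measurable_sets[OF measurable_lshift_\<mu> B] .
    have "X \<times> (lshift -` B \<inter> space \<mu>) = lshift2 -` (X \<times> B) \<inter> space U"
      using U space_\<mu> lshift_X by (auto simp: lshift2_def prob_on_algebra_def)
    then show "emeasure (distr U \<mu> snd) (lshift -` B \<inter> space \<mu>) = emeasure (distr U \<mu> snd) B"
      using emeasure_distr_snd[OF U B] emeasure_distr_snd[OF U B'] inv_U[of "X \<times> B"]
        measurable_sets[OF measurable_snd_\<mu>[OF \<nu>] B] vimage_snd_space[OF \<nu> B] by simp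
    have "emeasure (distr U \<mu> snd) B = emeasure \<nu> (A \<inter> (X \<times> B)) / emeasure \<nu> A"
      using emeasure_distr_snd[OF U B] emeasure_U measurable_sets[OF measurable_snd_\<mu>[OF \<nu>] B]
        vimage_snd_space[OF \<nu> B] by simp
    also have "\<dots> \<le> emeasure \<nu> (X \<times> B) / emeasure \<nu> A"
      using measurable_sets[OF measurable_snd_\<mu>[OF \<nu>] B] vimage_snd_space[OF \<nu> B]
      by (intro divide_right_mono_ennreal emeasure_mono) auto
    also have "\<dots> = (1 / emeasure \<nu> A) * emeasure \<mu> B"
      using marginal[OF B] by (simp add: divide_ennreal_def mult.commute)
    finally show "emeasure (distr U \<mu> snd) B \<le> (1 / emeasure \<nu> A) * emeasure \<mu> B" .
  qed simp_all
  then show ?thesis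
    using U inv_U distr_snd_eq_\<mu>_iff[OF U] by (auto simp: extensions_iff U_def prob_on_algebra_def \<nu>)
qed

lemma nonergodic_extension_split:
  assumes \<nu>: "\<nu> \<in> extensions \<Sigma> X Y \<mu>" "\<nu> \<notin> ergodic_extensions \<Sigma> X Y \<mu>"
  obtains \<nu>\<^sub>1 \<nu>\<^sub>2 t where "\<nu>\<^sub>1 \<in> extensions \<Sigma> X Y \<mu>" "\<nu>\<^sub>2 \<in> extensions \<Sigma> X Y \<mu>" "\<nu>\<^sub>1 \<noteq> \<nu>\<^sub>2"
    "0 < t" "t < 1" "\<And>S. S \<in> sets \<nu> \<Longrightarrow> measure \<nu> S = t * measure \<nu>\<^sub>1 S + (1 - t) * measure \<nu>\<^sub>2 S"
proof -
  interpret \<nu>: prob_space \<nu> using \<nu> by (simp add: extensions_iff prob_on_algebra_def)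
  obtain A where A: "A \<in> sets \<nu>" "lshift2 -` A \<inter> space \<nu> = A" "emeasure \<nu> A \<noteq> 0" "emeasure \<nu> A \<noteq> 1"
    using \<nu> by (auto simp: ergodic_extensions_def ergodic_borel_prob_def extensions_def)
  define t where "t = measure \<nu> A"
  have "0 \<le> t" "t \<le> 1" "t \<noteq> 0" "t \<noteq> 1"
    using A(3,4) by (simp_all add: t_def \<nu>.emeasure_eq_measure)
  then have "0 < t" "t < 1" by linarith+
  have \<nu>_alg: "prob_on_algebra \<nu>" using \<nu>(1) by (simp add: extensions_iff)
  have "lshift2 x \<in> A \<longleftrightarrow> x \<in> A" if "x \<in> space \<nu>" for x
    using A(2) that by blast
  then have "lshift2 -` (space \<nu> - A) \<inter> space \<nu> = space \<nu> - A"
    using measurable_space[OF measurable_lshift2[OF \<nu>_alg]] by blast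
  moreover have "emeasure \<nu> (space \<nu> - A) \<noteq> 0"
    using \<nu>.prob_compl[OF A(1)] \<open>t < 1\<close> by (simp add: \<nu>.emeasure_eq_measure t_def)
  ultimately have A': "space \<nu> - A \<in> sets \<nu>" "lshift2 -` (space \<nu> - A) \<inter> space \<nu> = space \<nu> - A"
    "emeasure \<nu> (space \<nu> - A) \<noteq> 0"
    using A(1) by auto
  have "measure (uniform_measure \<nu> A) A \<noteq> measure (uniform_measure \<nu> (space \<nu> - A)) A"
    using A(1,3) A'(1,3) by (simp add: \<nu>.emeasure_eq_measure Diff_Int_distrib2)
  then have "uniform_measure \<nu> A \<noteq> uniform_measure \<nu> (space \<nu> - A)" by metis
  then show ?thesis
    using that[OF uniform_measure_extension[OF \<nu>(1) A(1-3)] uniform_measure_extension[OF \<nu>(1) A']]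
      measure_uniform_measure_mixture[OF \<nu>.prob_space_axioms A(1)] \<open>0 < t\<close> \<open>t < 1\<close>
    unfolding t_def by blast
qed

lemma ergodic_if_max_energy_minimizer:
  assumes D: "D \<in> cyl\<^sub>X\<^sub>Y" and \<nu>: "\<nu> \<in> extensions \<Sigma> X Y \<mu>"
    and min: "\<And>\<nu>'. \<nu>' \<in> extensions \<Sigma> X Y \<mu> \<Longrightarrow> measure \<nu> D \<le> measure \<nu>' D"
    and max: "\<And>\<nu>'. \<nu>' \<in> extensions \<Sigma> X Y \<mu> \<Longrightarrow> measure \<nu>' D = measure \<nu> D \<Longrightarrow> energy \<nu>' \<le> energy \<nu>"
  shows "\<nu> \<in> ergodic_extensions \<Sigma> X Y \<mu>"
proof (rule ccontr)
  assume nonergodic: "\<nu> \<notin> ergodic_extensions \<Sigma> X Y \<mu>"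
  obtain \<nu>\<^sub>1 \<nu>\<^sub>2 t where ext: "\<nu>\<^sub>1 \<in> extensions \<Sigma> X Y \<mu>" "\<nu>\<^sub>2 \<in> extensions \<Sigma> X Y \<mu>"
    and "\<nu>\<^sub>1 \<noteq> \<nu>\<^sub>2" "0 < t" "t < 1"
    and mix: "\<And>S. S \<in> sets \<nu> \<Longrightarrow> measure \<nu> S = t * measure \<nu>\<^sub>1 S + (1 - t) * measure \<nu>\<^sub>2 S"
    using nonergodic_extension_split[OF \<nu> nonergodic] by blast
  have probs: "prob_on_algebra \<nu>" "prob_on_algebra \<nu>\<^sub>1" "prob_on_algebra \<nu>\<^sub>2"
    using \<nu> ext by (simp_all add: extensions_iff)
  have cyl_sets: "S \<in> sets \<nu>" if "S \<in> cyl\<^sub>X\<^sub>Y" for S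
    using probs(1) that by (simp add: prob_on_algebra_def)
  \<comment> \<open>\<open>\<nu> \<mapsto> measure \<nu> D\<close> is affine, so both halves of the split are again minimisers \<dots>\<close>
  have "measure \<nu>\<^sub>1 D = measure \<nu> D" "measure \<nu>\<^sub>2 D = measure \<nu> D"
    using convex_combination_eq_lower_bound[OF \<open>0 < t\<close> \<open>t < 1\<close> min[OF ext(1)] min[OF ext(2)]]
      mix[OF cyl_sets[OF D]] by simp_all
  then have "t * energy \<nu>\<^sub>1 \<le> t * energy \<nu>" "(1 - t) * energy \<nu>\<^sub>2 \<le> (1 - t) * energy \<nu>"
    using max[OF ext(1)] max[OF ext(2)] \<open>0 < t\<close> \<open>t < 1\<close> by (simp_all add: mult_left_mono)
  then have "t * energy \<nu>\<^sub>1 + (1 - t) * energy \<nu>\<^sub>2 \<le> energy \<nu>"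
    by (simp add: algebra_simps)
  \<comment> \<open>\<dots> but the energy is strictly convex.\<close>
  moreover have "energy \<nu> < t * energy \<nu>\<^sub>1 + (1 - t) * energy \<nu>\<^sub>2"
    by (rule energy_strictly_convex[OF probs \<open>\<nu>\<^sub>1 \<noteq> \<nu>\<^sub>2\<close> \<open>0 < t\<close> \<open>t < 1\<close>]) (simp add: mix cyl_sets)
  ultimately show False by simp
qed

lemma extensions_attain_min:
  assumes D: "D \<in> cyl\<^sub>X\<^sub>Y" and "extensions \<Sigma> X Y \<mu> \<noteq> {}"
  shows "\<exists>\<nu>\<in>extensions \<Sigma> X Y \<mu>. \<forall>\<nu>'\<in>extensions \<Sigma> X Y \<mu>. measure \<nu> D \<le> measure \<nu>' D"
proof (rule prob_on_algebra_attains_min[where b=0])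
  show "\<And>s \<nu>. (\<And>n. s n \<in> extensions \<Sigma> X Y \<mu>) \<Longrightarrow> prob_on_algebra \<nu> \<Longrightarrow> converges_on_algebra s \<nu>
          \<Longrightarrow> \<nu> \<in> extensions \<Sigma> X Y \<mu>"
    by (rule extensions_closed)
  show "\<And>s \<nu>. (\<And>n. s n \<in> extensions \<Sigma> X Y \<mu>) \<Longrightarrow> prob_on_algebra \<nu> \<Longrightarrow> converges_on_algebra s \<nu>
          \<Longrightarrow> (\<lambda>n. measure (s n) D) \<longlonglongrightarrow> measure \<nu> D"
    using D by (simp add: converges_on_algebra_def)
qed (simp_all add: assms(2) extensions_iff)

lemma exists_ergodic_minimizer:
  assumes D: "D \<in> cyl\<^sub>X\<^sub>Y" and "extensions \<Sigma> X Y \<mu> \<noteq> {}"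
  obtains \<nu> where "\<nu> \<in> ergodic_extensions \<Sigma> X Y \<mu>"
    "\<And>\<nu>'. \<nu>' \<in> extensions \<Sigma> X Y \<mu> \<Longrightarrow> measure \<nu> D \<le> measure \<nu>' D"
proof -
  obtain \<nu>\<^sub>0 where \<nu>\<^sub>0: "\<nu>\<^sub>0 \<in> extensions \<Sigma> X Y \<mu>"
    "\<And>\<nu>'. \<nu>' \<in> extensions \<Sigma> X Y \<mu> \<Longrightarrow> measure \<nu>\<^sub>0 D \<le> measure \<nu>' D"
    using extensions_attain_min[OF assms] by blast
  define K where "K = {\<nu> \<in> extensions \<Sigma> X Y \<mu>. measure \<nu> D = measure \<nu>\<^sub>0 D}"
  have K_probs: "\<And>\<nu>. \<nu> \<in> K \<Longrightarrow> prob_on_algebra \<nu>"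
    by (simp add: K_def extensions_iff)
  have "\<exists>\<nu>\<in>K. \<forall>\<nu>'\<in>K. - energy \<nu> \<le> - energy \<nu>'"
  proof (rule prob_on_algebra_attains_min[where b="-2", OF _ K_probs])
    show "K \<noteq> {}" using \<nu>\<^sub>0(1) by (auto simp: K_def)
    show "\<nu> \<in> K" if s: "\<And>n. s n \<in> K" and "prob_on_algebra \<nu>" "converges_on_algebra s \<nu>" for s \<nu>
    proof -
      have "s n \<in> extensions \<Sigma> X Y \<mu>" for n using s by (simp add: K_def)
      then have "\<nu> \<in> extensions \<Sigma> X Y \<mu>" using that(2,3) by (rule extensions_closed)
      moreover have "measure \<nu> D = measure \<nu>\<^sub>0 D"
        using converges_on_algebra_const[OF that(3) D] s by (simp add: K_def)
      ultimately show ?thesis by (simp add: K_def)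
    qed
    show "\<And>s \<nu>. (\<And>n. s n \<in> K) \<Longrightarrow> prob_on_algebra \<nu> \<Longrightarrow> converges_on_algebra s \<nu>
            \<Longrightarrow> (\<lambda>n. - energy (s n)) \<longlonglongrightarrow> - energy \<nu>"
      using energy_tendsto K_probs by (intro tendsto_minus) blast
    show "\<And>\<nu>. \<nu> \<in> K \<Longrightarrow> - 2 \<le> - energy \<nu>"
      using energy_le_2 K_probs by force
  qed
  then obtain \<nu> where \<nu>: "\<nu> \<in> K" "\<And>\<nu>'. \<nu>' \<in> K \<Longrightarrow> energy \<nu>' \<le> energy \<nu>"
    by auto
  have "\<nu> \<in> ergodic_extensions \<Sigma> X Y \<mu>"
    using \<nu> \<nu>\<^sub>0 by (intro ergodic_if_max_energy_minimizer[OF D]) (auto simp: K_def)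
  then show ?thesis using that \<nu> \<nu>\<^sub>0 by (auto simp: K_def)
qed

end

theorem proposition23:
  fixes \<Sigma> :: "'a set" and X Y :: "(int \<Rightarrow> 'a) set" and \<mu> :: "(int \<Rightarrow> 'a) measure"
  assumes "finite \<Sigma>"
    and "shift_space \<Sigma> X" and "shift_space \<Sigma> Y"
    and "ergodic_borel_prob (subtopology (full_shift_top \<Sigma>) Y) lshift \<mu>"
  shows "Inf ((\<lambda>\<nu>. measure \<nu> {(x, y) \<in> X \<times> Y. x 0 \<noteq> y 0}) ` ergodic_extensions \<Sigma> X Y \<mu>)
       = Inf ((\<lambda>\<nu>. measure \<nu> {(x, y) \<in> X \<times> Y. x 0 \<noteq> y 0}) ` extensions \<Sigma> X Y \<mu>)"
proof -
  interpret shift_extensions \<Sigma> X Y \<mu> using assms by unfold_locales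
  let ?D = "{(x, y) \<in> X \<times> Y. x 0 \<noteq> y 0}"
  have ergodic_sub: "ergodic_extensions \<Sigma> X Y \<mu> \<subseteq> extensions \<Sigma> X Y \<mu>"
    by (auto simp: ergodic_extensions_def)
  show ?thesis
  proof (cases "extensions \<Sigma> X Y \<mu> = {}")
    case False
    then obtain \<nu> where "\<nu> \<in> ergodic_extensions \<Sigma> X Y \<mu>"
      "\<And>\<nu>'. \<nu>' \<in> extensions \<Sigma> X Y \<mu> \<Longrightarrow> measure \<nu> ?D \<le> measure \<nu>' ?D"
      using exists_ergodic_minimizer[OF disagreement_cylinder] by blast
    then have "Inf ((\<lambda>\<nu>. measure \<nu> ?D) ` E) = measure \<nu> ?D"
      if "E \<in> {ergodic_extensions \<Sigma> X Y \<mu>, extensions \<Sigma> X Y \<mu>}" for E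
      using that ergodic_sub by (intro cInf_eq_minimum) auto
    then show ?thesis by simp
  qed (use ergodic_sub in simp)
qed

end
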